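(* Let $\gamma>0$, $v\in[0,1]^N$, $r\in[0,1]^N$, and let $$q\in\arg\max_{\rho\in\Delta(\mathcal{S})}\;\mathbb{E}_{S\sim\rho}[R(S,v,r)]-\frac{(K+1)^4}{\gamma}\sum_{i=1}^N\log\frac{1}{w_i(\rho)}.$$ Then there is an absolute constant $C>0$ (independent of $N,K,\gamma,v,r$) such that $\mathsf{dec}_\gamma(q;v,r)\le \frac{C\,NK^4}{\gamma}$.
   Context: $N\ge K\ge1$ are integers and $\mathcal{S}$ is the collection of subsets $S\subseteq[N]$ with $1\le|S|\le K$; $\Delta(\mathcal{S})$ is the set of probability distributions on $\mathcal{S}$. For $S\in\mathcal{S}$ and $v\in[0,1]^N$, $\mu(S,v)\in\mathbb{R}^{N+1}$ is the distribution on $\{0,\dots,N\}$ with $\mu_i(S,v)=\frac{v_i}{1+\sum_{j\in S}v_j}$ for $i\in S$, $\mu_0(S,v)=\frac{1}{1+\sum_{j\in S}v_j}$, and $\mu_i(S,v)=0$ otherwise. $R(S,v,r)=\frac{\sum_{i\in S}r_iv_i}{1+\sum_{i\in S}v_i}$. For $\rho\in\Delta(\mathcal{S})$, $w_i(\rho)=\sum_{S\ni i}\rho(S)$. The Decision-Estimation Coefficient of $q\in\Delta(\mathcal{S})$ is $$\mathsf{dec}_\gamma(q;v,r)=\max_{v^\star\in[0,1]^N}\max_{S^\star\in\mathcal{S}}\Big\{R(S^\star,v^\star,r)-\mathbb{E}_{S\sim q}[R(S,v^\star,r)]-\gamma\,\mathbb{E}_{S\sim q}\big[\|\mu(S,v)-\mu(S,v^\star)\|_2^2\big]\Big\}.$$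 *)

theory Defs
  imports Complex_Main
begin

text \<open>Ground set [N] = {1..N}; item 0 is the no-purchase option.\<close>

definition assortments :: "nat \<Rightarrow> nat \<Rightarrow> nat set set" where
  "assortments N K = {S. S \<subseteq> {1..N} \<and> 1 \<le> card S \<and> card S \<le> K}"

definition dists :: "nat \<Rightarrow> nat \<Rightarrow> (nat set \<Rightarrow> real) set" where
  "dists N K = {\<rho>. (\<forall>S. \<rho> S \<ge> 0) \<and> (\<forall>S. S \<notin> assortments N K \<longrightarrow> \<rho> S = 0)
                   \<and> (\<Sum>S\<in>assortments N K. \<rho> S) = 1}"

definition expect :: "nat \<Rightarrow> nat \<Rightarrow> (nat set \<Rightarrow> real) \<Rightarrow> (nat set \<Rightarrow> real) \<Rightarrow> real" where
  "expect N K \<rho> f = (\<Sum>S\<in>assortments N K. \<rho> S * f S)"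

definition cube :: "nat \<Rightarrow> (nat \<Rightarrow> real) set" where
  "cube N = {v. \<forall>i\<in>{1..N}. 0 \<le> v i \<and> v i \<le> 1}"

definition mnl_mu :: "nat set \<Rightarrow> (nat \<Rightarrow> real) \<Rightarrow> nat \<Rightarrow> real" where
  "mnl_mu S v i = (if i = 0 then 1 / (1 + (\<Sum>j\<in>S. v j))
                   else if i \<in> S then v i / (1 + (\<Sum>j\<in>S. v j)) else 0)"

definition mnl_R :: "nat set \<Rightarrow> (nat \<Rightarrow> real) \<Rightarrow> (nat \<Rightarrow> real) \<Rightarrow> real" where
  "mnl_R S v r = (\<Sum>i\<in>S. r i * v i) / (1 + (\<Sum>i\<in>S. v i))"

definition mu_dist2 :: "nat \<Rightarrow> nat set \<Rightarrow> (nat \<Rightarrow> real) \<Rightarrow> (nat \<Rightarrow> real) \<Rightarrow> real" where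
  "mu_dist2 N S v v' = (\<Sum>i\<in>{0..N}. (mnl_mu S v i - mnl_mu S v' i)\<^sup>2)"

definition wt :: "nat \<Rightarrow> nat \<Rightarrow> (nat set \<Rightarrow> real) \<Rightarrow> nat \<Rightarrow> real" where
  "wt N K \<rho> i = (\<Sum>S\<in>{S\<in>assortments N K. i \<in> S}. \<rho> S)"

text \<open>Objective E_rho[R(S,v,r)] - (K+1)^4/gamma * sum_i log(1/w_i(rho)); it equals -infinity
  when some w_i(rho) = 0, so it is only evaluated at rho with all w_i(rho) > 0.\<close>
definition objective :: "nat \<Rightarrow> nat \<Rightarrow> real \<Rightarrow> (nat \<Rightarrow> real) \<Rightarrow> (nat \<Rightarrow> real) \<Rightarrow> (nat set \<Rightarrow> real) \<Rightarrow> real" where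
  "objective N K \<gamma> v r \<rho> = expect N K \<rho> (\<lambda>S. mnl_R S v r)
     - (real (K + 1))^4 / \<gamma> * (\<Sum>i\<in>{1..N}. ln (1 / wt N K \<rho> i))"

definition is_argmax :: "nat \<Rightarrow> nat \<Rightarrow> real \<Rightarrow> (nat \<Rightarrow> real) \<Rightarrow> (nat \<Rightarrow> real) \<Rightarrow> (nat set \<Rightarrow> real) \<Rightarrow> bool" where
  "is_argmax N K \<gamma> v r q \<longleftrightarrow> q \<in> dists N K \<and> (\<forall>i\<in>{1..N}. wt N K q i > 0) \<and>
     (\<forall>\<rho>\<in>dists N K. (\<forall>i\<in>{1..N}. wt N K \<rho> i > 0) \<longrightarrow>
        objective N K \<gamma> v r \<rho> \<le> objective N K \<gamma> v r q)"

definition dec :: "nat \<Rightarrow> nat \<Rightarrow> real \<Rightarrow> (nat set \<Rightarrow> real) \<Rightarrow> (nat \<Rightarrow> real) \<Rightarrow> (nat \<Rightarrow> real) \<Rightarrow> real" where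
  "dec N K \<gamma> q v r = (SUP p \<in> cube N \<times> assortments N K.
      mnl_R (snd p) (fst p) r - expect N K q (\<lambda>S. mnl_R S (fst p) r)
      - \<gamma> * expect N K q (\<lambda>S. mu_dist2 N S v (fst p)))"

end

theory Submission
  imports Defs
begin

(* Write w_i = w_i(q) and lam = (K+1)^4/gamma. Moving a small mass t of the maximiser q onto
   the point mass at S' raises the barrier sum_i ln w_i by at least
   t/2 sum_{i in S'} 1/w_i - 2tN, so optimality of q gives the first-order condition
   R(S',v) - E_q R(S,v) <= 2 lam N - lam/2 sum_{i in S'} 1/w_i.
   The revenue is 1-Lipschitz in v, and AM-GM splits sum_{i in S'} |v'_i - v_i| into a multiple
   of sum_{i in S'} w_i (v_i - v'_i)^2, which is at most 2(K+1)^3 times the expected squared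
   distance of the choice probabilities, plus a multiple of sum_{i in S'} 1/w_i that the
   first-order condition absorbs. The remaining term E_q[R(S,v) - R(S,v')] is bounded by the
   same squared distance, again by AM-GM. *)

lemma abs_le_mult_square_add:
  fixes x c :: real
  assumes "c > 0"
  shows "\<bar>x\<bar> \<le> c * x^2 + 1 / (4 * c)"
proof -
  have "0 \<le> (2 * c * \<bar>x\<bar> - 1)^2" by simp
  hence "4 * c * \<bar>x\<bar> \<le> 4 * c * (c * x^2 + 1 / (4 * c))"
    using assms by (simp add: power2_eq_square algebra_simps)
  thus ?thesis using assms by simp
qed

lemma square_diff_le_ratio_diffs:
  fixes x y b b' k :: real
  assumes "1 \<le> b" "b \<le> k" "1 \<le> b'" "0 \<le> y" "y \<le> 1"
  shows "(x - y)^2 \<le> 2 * k^2 * ((x / b - y / b')^2 + (1 / b - 1 / b')^2)"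
proof -
  define p where "p = x / b - y / b'"
  define s where "s = 1 / b - 1 / b'"
  have "x - y = b * p - y * b * s" unfolding p_def s_def using assms by (simp add: field_simps)
  hence "\<bar>x - y\<bar> \<le> b * \<bar>p\<bar> + y * b * \<bar>s\<bar>"
    using assms abs_triangle_ineq4[of "b * p" "y * b * s"] by (simp add: abs_mult)
  also have "\<dots> \<le> k * \<bar>p\<bar> + 1 * k * \<bar>s\<bar>"
    using assms by (intro add_mono mult_right_mono mult_mono) auto
  finally have "\<bar>x - y\<bar> \<le> k * (\<bar>p\<bar> + \<bar>s\<bar>)" by (simp add: algebra_simps)
  hence "\<bar>x - y\<bar>^2 \<le> k^2 * (\<bar>p\<bar> + \<bar>s\<bar>)^2"
    by (metis abs_ge_zero power2_abs power_mono power_mult_distrib)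
  also have "\<dots> \<le> k^2 * (2 * (p^2 + s^2))"
  proof (rule mult_left_mono)
    have "0 \<le> (\<bar>p\<bar> - \<bar>s\<bar>)^2" by simp
    thus "(\<bar>p\<bar> + \<bar>s\<bar>)^2 \<le> 2 * (p^2 + s^2)" by (simp add: power2_eq_square algebra_simps)
  qed simp
  finally show ?thesis unfolding p_def s_def by (simp add: algebra_simps)
qed

lemma ln_mix_with_one_ge:
  fixes w t :: real
  assumes "0 < w" "w \<le> 1" "0 < t" "t \<le> w / 4"
  shows "ln ((1 - t) * w + t) - ln w \<ge> t / (2 * w) - 2 * t"
proof -
  define x where "x = t * (1 - w) / w"
  have x0: "0 \<le> x" unfolding x_def using assms by auto
  have "x \<le> t / w" unfolding x_def using assms by (simp add: divide_right_mono algebra_simps)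
  also have "t / w \<le> 1 / 4" using assms by (simp add: divide_le_eq)
  finally have x1: "x \<le> 1 / 4" .
  have "(1 - t) * w + t = w * (1 + x)" unfolding x_def using assms by (simp add: field_simps)
  hence "ln ((1 - t) * w + t) - ln w = ln (1 + x)" using assms x0 by (simp add: ln_mult)
  also have "\<dots> \<ge> x - x^2" using ln_one_plus_pos_lower_bound[of x] x0 x1 by simp
  finally have "ln ((1 - t) * w + t) - ln w \<ge> x - x^2" .
  moreover have "x * (2 * x) \<le> x * 1" using x0 x1 by (intro mult_left_mono) auto
  hence "x - x^2 \<ge> x / 2" by (simp add: power2_eq_square)
  moreover have "x / 2 = t / (2 * w) - t / 2" unfolding x_def using assms by (simp add: field_simps)
  ultimately show ?thesis using assms by linarith
qed

lemma ln_shrink_ge: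
  fixes w t :: real
  assumes "0 < w" "0 < t" "t \<le> 1 / 4"
  shows "ln ((1 - t) * w) - ln w \<ge> - 2 * t"
proof -
  have "ln ((1 - t) * w) - ln w = ln (1 - t)" using assms by (simp add: ln_mult)
  moreover have "ln (1 - t) \<ge> - t - 2 * t^2" using ln_one_minus_pos_lower_bound[of t] assms by simp
  moreover have "2 * t^2 \<le> t" using assms by (simp add: power2_eq_square)
  ultimately show ?thesis by linarith
qed

lemma finite_assortments: "finite (assortments N K)"
  by (rule finite_subset[of _ "Pow {1..N}"]) (auto simp: assortments_def)

lemma assortmentsD:
  assumes "S \<in> assortments N K"
  shows "S \<subseteq> {1..N}" "finite S" "card S \<le> K" "0 \<notin> S" "S \<noteq> {}"
  using assms finite_subset[of S "{1..N}"] by (auto simp: assortments_def)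

lemma sum_cube_bounds:
  assumes "S \<in> assortments N K" "v \<in> cube N"
  shows "0 \<le> (\<Sum>j\<in>S. v j)" "(\<Sum>j\<in>S. v j) \<le> real K"
proof -
  have v: "\<forall>j\<in>S. 0 \<le> v j \<and> v j \<le> 1" using assortmentsD(1)[OF assms(1)] assms(2) by (auto simp: cube_def)
  thus "0 \<le> (\<Sum>j\<in>S. v j)" by (auto intro: sum_nonneg)
  have "(\<Sum>j\<in>S. v j) \<le> real (card S)" using v sum_mono[of S v "\<lambda>_. 1"] by simp
  thus "(\<Sum>j\<in>S. v j) \<le> real K" using assortmentsD(3)[OF assms(1)] by linarith
qed

lemma mnl_R_lipschitz:
  assumes "finite S" "\<forall>i\<in>S. 0 \<le> v i \<and> 0 \<le> v' i \<and> 0 \<le> r i \<and> r i \<le> 1"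
  shows "mnl_R S v' r - mnl_R S v r \<le> (\<Sum>i\<in>S. \<bar>v' i - v i\<bar>)"
proof -
  define B where "B = (\<Sum>i\<in>S. v i)"
  define B' where "B' = (\<Sum>i\<in>S. v' i)"
  define A where "A = (\<Sum>i\<in>S. r i * v i)"
  define A' where "A' = (\<Sum>i\<in>S. r i * v' i)"
  define R where "R = A / (1 + B)"
  define X where "X = A' - A - R * (B' - B)"
  have B0: "B \<ge> 0" "B' \<ge> 0" unfolding B_def B'_def using assms by (auto intro: sum_nonneg)
  have "0 \<le> A" "A \<le> B" unfolding A_def B_def using assms
    by (auto intro!: sum_nonneg sum_mono simp: mult_left_le_one_le)
  hence R01: "0 \<le> R" "R \<le> 1" unfolding R_def using B0 by auto
  have "mnl_R S v' r - mnl_R S v r = A' / (1 + B') - R"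
    unfolding mnl_R_def A_def A'_def B_def B'_def R_def ..
  also have "\<dots> = X / (1 + B')"
    unfolding X_def R_def using B0 by (simp add: field_simps)
  finally have eq: "mnl_R S v' r - mnl_R S v r = X / (1 + B')" .
  text \<open>Centring the prices at the current revenue \<open>R\<close> makes every coefficient at most 1.\<close>
  have "X = (\<Sum>i\<in>S. (r i - R) * (v' i - v i))"
    unfolding X_def A_def A'_def B_def B'_def
    by (simp add: sum_subtractf[symmetric] sum_distrib_left algebra_simps)
  also have "\<dots> \<le> (\<Sum>i\<in>S. \<bar>v' i - v i\<bar>)"
  proof (rule sum_mono)
    fix i assume "i \<in> S"
    hence "\<bar>r i - R\<bar> \<le> 1" using assms R01 by auto
    hence "\<bar>r i - R\<bar> * \<bar>v' i - v i\<bar> \<le> \<bar>v' i - v i\<bar>" by (simp add: mult_left_le_one_le)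
    thus "(r i - R) * (v' i - v i) \<le> \<bar>v' i - v i\<bar>" by (metis abs_ge_self abs_mult order_trans)
  qed
  finally have "max 0 X \<le> (\<Sum>i\<in>S. \<bar>v' i - v i\<bar>)" by (simp add: sum_nonneg)
  moreover have "X / (1 + B') \<le> max 0 X" using B0 by (cases "X \<le> 0") (auto simp: divide_le_eq divide_nonpos_pos)
  ultimately show ?thesis unfolding eq by linarith
qed

lemma mnl_R_eq_sum_mnl_mu:
  assumes "0 \<notin> S"
  shows "mnl_R S v r = (\<Sum>i\<in>S. r i * mnl_mu S v i)"
proof -
  have "(\<Sum>i\<in>S. r i * mnl_mu S v i) = (\<Sum>i\<in>S. r i * v i / (1 + (\<Sum>j\<in>S. v j)))"
    unfolding mnl_mu_def using assms by (intro sum.cong) auto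
  thus ?thesis unfolding mnl_R_def by (simp add: sum_divide_distrib)
qed

lemma mnl_R_diff_le_mu_dist2:
  assumes "S \<in> assortments N K" "r \<in> cube N" "c > 0"
  shows "mnl_R S v r - mnl_R S v' r \<le> c * mu_dist2 N S v v' + real K / (4 * c)"
proof -
  note S = assortmentsD[OF assms(1)]
  define D where "D i = mnl_mu S v i - mnl_mu S v' i" for i
  have "mnl_R S v r - mnl_R S v' r = (\<Sum>i\<in>S. r i * D i)"
    unfolding mnl_R_eq_sum_mnl_mu[OF S(4)] D_def by (simp add: sum_subtractf[symmetric] algebra_simps)
  also have "\<dots> \<le> (\<Sum>i\<in>S. c * (D i)^2 + 1 / (4 * c))"
  proof (rule sum_mono)
    fix i assume "i \<in> S"
    hence r: "0 \<le> r i" "r i \<le> 1" using S(1) assms(2) by (auto simp: cube_def)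
    have "r i * D i \<le> \<bar>D i\<bar>"
      using r by (metis abs_ge_self abs_mult abs_of_nonneg mult_left_le_one_le abs_ge_zero order_trans)
    also have "\<dots> \<le> c * (D i)^2 + 1 / (4 * c)" using abs_le_mult_square_add[OF assms(3)] by simp
    finally show "r i * D i \<le> c * (D i)^2 + 1 / (4 * c)" .
  qed
  also have "\<dots> = c * (\<Sum>i\<in>S. (D i)^2) + real (card S) / (4 * c)"
    by (simp add: sum.distrib sum_distrib_left)
  also have "\<dots> \<le> c * mu_dist2 N S v v' + real K / (4 * c)"
  proof (intro add_mono mult_left_mono divide_right_mono)
    show "(\<Sum>i\<in>S. (D i)^2) \<le> mu_dist2 N S v v'"
      unfolding mu_dist2_def D_def by (rule sum_mono2) (use S in auto)
  qed (use S assms in auto)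
  finally show ?thesis .
qed

lemma square_diff_le_mnl_mu_diffs:
  assumes "S \<in> assortments N K" "i \<in> S" "v \<in> cube N" "v' \<in> cube N"
  shows "(v i - v' i)^2 \<le> 2 * (real K + 1)^2 *
           ((mnl_mu S v i - mnl_mu S v' i)^2 + (mnl_mu S v 0 - mnl_mu S v' 0)^2)"
proof -
  note S = assortmentsD[OF assms(1)]
  have "i \<noteq> 0" "i \<in> {1..N}" using assms(2) S by auto
  moreover have "0 \<le> v' i" "v' i \<le> 1" using assms(4) \<open>i \<in> {1..N}\<close> by (auto simp: cube_def)
  ultimately show ?thesis
    using square_diff_le_ratio_diffs[of "1 + (\<Sum>j\<in>S. v j)" "real K + 1" "1 + (\<Sum>j\<in>S. v' j)" "v' i" "v i"]
      sum_cube_bounds[OF assms(1) assms(3)] sum_cube_bounds[OF assms(1) assms(4)] assms(2)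
    unfolding mnl_mu_def by simp
qed

text \<open>All items of \<open>S\<close> share the no-purchase coordinate, which is where the extra factor
  \<open>K + 1\<close> comes from.\<close>
lemma sum_square_diff_le_mu_dist2:
  assumes "S \<in> assortments N K" "v \<in> cube N" "v' \<in> cube N"
  shows "(\<Sum>i\<in>S \<inter> S'. (v i - v' i)^2) \<le> 2 * (real K + 1)^3 * mu_dist2 N S v v'"
proof -
  note S = assortmentsD[OF assms(1)]
  define D where "D i = (mnl_mu S v i - mnl_mu S v' i)^2" for i
  have D0: "D 0 \<ge> 0" "(\<Sum>i\<in>S \<inter> S'. D i) \<ge> 0" unfolding D_def by (auto intro: sum_nonneg)
  have cI: "card (S \<inter> S') \<le> K" using S card_mono[OF S(2), of "S \<inter> S'"] by auto
  have "(\<Sum>i\<in>S \<inter> S'. (v i - v' i)^2) \<le> (\<Sum>i\<in>S \<inter> S'. 2 * (real K + 1)^2 * (D i + D 0))"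
    unfolding D_def by (intro sum_mono square_diff_le_mnl_mu_diffs[OF assms(1) _ assms(2,3)]) auto
  also have "\<dots> = 2 * (real K + 1)^2 * ((\<Sum>i\<in>S \<inter> S'. D i) + real (card (S \<inter> S')) * D 0)"
    by (simp add: sum_distrib_left[symmetric] sum.distrib)
  also have "\<dots> \<le> 2 * (real K + 1)^2 * ((real K + 1) * ((\<Sum>i\<in>S \<inter> S'. D i) + D 0))"
  proof (rule mult_left_mono)
    have "real (card (S \<inter> S')) * D 0 \<le> (real K + 1) * D 0" using cI D0 by (intro mult_right_mono) auto
    moreover have "(\<Sum>i\<in>S \<inter> S'. D i) \<le> (real K + 1) * (\<Sum>i\<in>S \<inter> S'. D i)"
      using D0 by (simp add: mult_le_cancel_right1)
    ultimately show "(\<Sum>i\<in>S \<inter> S'. D i) + real (card (S \<inter> S')) * D 0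
        \<le> (real K + 1) * ((\<Sum>i\<in>S \<inter> S'. D i) + D 0)"
      by (simp add: algebra_simps)
  qed simp
  also have "(\<Sum>i\<in>S \<inter> S'. D i) + D 0 \<le> mu_dist2 N S v v'"
  proof -
    have "(\<Sum>i\<in>S \<inter> S'. D i) + D 0 = (\<Sum>i\<in>insert 0 (S \<inter> S'). D i)" using S by simp
    also have "\<dots> \<le> (\<Sum>i\<in>{0..N}. D i)" by (rule sum_mono2) (use S in \<open>auto simp: D_def\<close>)
    finally show ?thesis unfolding D_def mu_dist2_def .
  qed
  hence "2 * (real K + 1)^2 * ((real K + 1) * ((\<Sum>i\<in>S \<inter> S'. D i) + D 0))
      \<le> 2 * (real K + 1)^3 * mu_dist2 N S v v'"
    by (simp add: power2_eq_square power3_eq_cube)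
  finally show ?thesis .
qed

definition mix_point :: "real \<Rightarrow> (nat set \<Rightarrow> real) \<Rightarrow> nat set \<Rightarrow> nat set \<Rightarrow> real" where
  "mix_point t q S' S = (1 - t) * q S + t * (if S = S' then 1 else 0)"

lemma mix_point_in_dists:
  assumes "q \<in> dists N K" "S' \<in> assortments N K" "0 \<le> t" "t \<le> 1"
  shows "mix_point t q S' \<in> dists N K"
  using assms finite_assortments[of N K]
  by (auto simp: dists_def mix_point_def sum.distrib sum_distrib_left[symmetric] sum.delta)

lemma wt_mix_point:
  assumes "S' \<in> assortments N K"
  shows "wt N K (mix_point t q S') i = (1 - t) * wt N K q i + t * (if i \<in> S' then 1 else 0)"
  using assms finite_assortments[of N K]
  by (simp add: wt_def mix_point_def sum.distrib sum_distrib_left[symmetric] sum.delta)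

lemma expect_mix_point:
  assumes "S' \<in> assortments N K"
  shows "expect N K (mix_point t q S') f = (1 - t) * expect N K q f + t * f S'"
proof -
  have "expect N K (mix_point t q S') f
      = (\<Sum>S\<in>assortments N K. (1 - t) * (q S * f S) + t * (if S = S' then f S else 0))"
    unfolding expect_def mix_point_def by (intro sum.cong) (auto simp: algebra_simps)
  thus ?thesis using assms finite_assortments[of N K]
    by (simp add: expect_def sum.distrib sum_distrib_left[symmetric] sum.delta)
qed

lemma wt_le_one:
  assumes "q \<in> dists N K"
  shows "wt N K q i \<le> 1"
proof -
  have "wt N K q i \<le> (\<Sum>S\<in>assortments N K. q S)"
    unfolding wt_def using assms finite_assortments[of N K]
    by (intro sum_mono2) (auto simp: dists_def)
  thus ?thesis using assms by (simp add: dists_def)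
qed

lemma sum_wt_mult_eq_expect:
  assumes "finite S'"
  shows "(\<Sum>i\<in>S'. wt N K q i * f i) = expect N K q (\<lambda>S. \<Sum>i\<in>S \<inter> S'. f i)"
proof -
  have "(\<Sum>i\<in>S'. wt N K q i * f i) = (\<Sum>i\<in>S'. \<Sum>S\<in>assortments N K. if i \<in> S then q S * f i else 0)"
    unfolding wt_def sum_distrib_right
    by (simp add: sum.inter_filter[OF finite_assortments] if_distrib[of "\<lambda>x. x * f _"] cong: if_cong)
  also have "\<dots> = (\<Sum>S\<in>assortments N K. \<Sum>i\<in>S'. if i \<in> S then q S * f i else 0)"
    by (rule sum.swap)
  also have "\<dots> = expect N K q (\<lambda>S. \<Sum>i\<in>S \<inter> S'. f i)"
    unfolding expect_def sum_distrib_left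
  proof (rule sum.cong[OF refl])
    fix S
    have "{i\<in>S'. i \<in> S} = S \<inter> S'" by auto
    thus "(\<Sum>i\<in>S'. if i \<in> S then q S * f i else 0) = (\<Sum>i\<in>S \<inter> S'. q S * f i)"
      using sum.inter_filter[OF assms, of "\<lambda>i. q S * f i" "\<lambda>i. i \<in> S"] by simp
  qed
  finally show ?thesis .
qed

lemma sum_ln_wt_mix_point_ge:
  assumes q: "q \<in> dists N K" and S': "S' \<in> assortments N K"
    and wpos: "\<forall>i\<in>{1..N}. wt N K q i > 0"
    and t: "0 < t" "t \<le> 1 / 4" "\<forall>i\<in>{1..N}. t \<le> wt N K q i / 4"
  shows "(\<Sum>i\<in>{1..N}. ln (wt N K (mix_point t q S') i)) - (\<Sum>i\<in>{1..N}. ln (wt N K q i))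
    \<ge> t / 2 * (\<Sum>i\<in>S'. 1 / wt N K q i) - 2 * t * real N"
proof -
  let ?w = "wt N K q"
  have "(\<Sum>i\<in>{1..N}. (if i \<in> S' then t / (2 * ?w i) else 0) - 2 * t)
      \<le> (\<Sum>i\<in>{1..N}. ln (wt N K (mix_point t q S') i) - ln (?w i))"
  proof (rule sum_mono)
    fix i assume "i \<in> {1..N}"
    thus "(if i \<in> S' then t / (2 * ?w i) else 0) - 2 * t \<le> ln (wt N K (mix_point t q S') i) - ln (?w i)"
      using ln_mix_with_one_ge[of "?w i" t] ln_shrink_ge[of "?w i" t] wt_le_one[OF q, of i] wpos t
      unfolding wt_mix_point[OF S'] by auto
  qed
  moreover have "{i\<in>{1..N}. i \<in> S'} = S'" using assortmentsD(1)[OF S'] by auto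
  hence "(\<Sum>i\<in>{1..N}. if i \<in> S' then t / (2 * ?w i) else 0) = t / 2 * (\<Sum>i\<in>S'. 1 / ?w i)"
    using sum.inter_filter[of "{1..N}" "\<lambda>i. t / (2 * ?w i)" "\<lambda>i. i \<in> S'"]
    by (simp add: sum_distrib_left)
  moreover have "(\<Sum>i\<in>{1..N}. (if i \<in> S' then t / (2 * ?w i) else 0) - 2 * t)
      = (\<Sum>i\<in>{1..N}. if i \<in> S' then t / (2 * ?w i) else 0) - 2 * t * real N"
    by (simp add: sum_subtractf)
  moreover have "(\<Sum>i\<in>{1..N}. ln (wt N K (mix_point t q S') i) - ln (?w i))
      = (\<Sum>i\<in>{1..N}. ln (wt N K (mix_point t q S') i)) - (\<Sum>i\<in>{1..N}. ln (?w i))"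
    by (rule sum_subtractf)
  ultimately show ?thesis by linarith
qed

lemma argmax_first_order:
  assumes am: "is_argmax N K \<gamma> v r q" and "\<gamma> > 0" and S': "S' \<in> assortments N K"
  shows "mnl_R S' v r - expect N K q (\<lambda>S. mnl_R S v r)
    \<le> (real K + 1)^4 / \<gamma> * (2 * real N - (\<Sum>i\<in>S'. 1 / wt N K q i) / 2)"
proof -
  define lam where "lam = (real K + 1)^4 / \<gamma>"
  define w where "w = wt N K q"
  have q: "q \<in> dists N K" and wpos: "\<forall>i\<in>{1..N}. w i > 0"
    and opt: "\<And>\<rho>. \<rho> \<in> dists N K \<Longrightarrow> \<forall>i\<in>{1..N}. wt N K \<rho> i > 0 \<Longrightarrow>
        objective N K \<gamma> v r \<rho> \<le> objective N K \<gamma> v r q"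
    using am unfolding is_argmax_def w_def by auto
  have ne: "{1..N} \<noteq> {}" using assortmentsD(1,5)[OF S'] by auto
  define t where "t = Min (w ` {1..N}) / 4"
  have tw: "\<forall>i\<in>{1..N}. t \<le> w i / 4" unfolding t_def by (auto intro: divide_right_mono)
  have "1 \<in> {1..N}" using ne by auto
  have "t \<le> w 1 / 4" "w 1 \<le> 1" using tw \<open>1 \<in> {1..N}\<close> wt_le_one[OF q] unfolding w_def by auto
  moreover have "0 < t" using wpos ne unfolding t_def by (simp add: Min_gr_iff)
  ultimately have t: "0 < t" "t \<le> 1 / 4" by auto
  define \<rho> where "\<rho> = mix_point t q S'"
  have \<rho>: "\<rho> \<in> dists N K" unfolding \<rho>_def using q S' t by (intro mix_point_in_dists) auto
  have \<rho>pos: "\<forall>i\<in>{1..N}. wt N K \<rho> i > 0"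
    using wpos t unfolding \<rho>_def wt_mix_point[OF S'] w_def by (auto intro: add_pos_nonneg)
  have ln_inv: "(\<Sum>i\<in>{1..N}. ln (1 / wt N K p i)) = - (\<Sum>i\<in>{1..N}. ln (wt N K p i))"
    if "\<forall>i\<in>{1..N}. wt N K p i > 0" for p
    unfolding sum_negf[symmetric] using that by (intro sum.cong) (auto simp: ln_div)
  have "t * (mnl_R S' v r - expect N K q (\<lambda>S. mnl_R S v r))
      \<le> lam * ((\<Sum>i\<in>{1..N}. ln (w i)) - (\<Sum>i\<in>{1..N}. ln (wt N K \<rho> i)))"
    using opt[OF \<rho> \<rho>pos] wpos
    unfolding objective_def ln_inv[OF \<rho>pos] w_def ln_inv[OF wpos[unfolded w_def]]
    by (simp add: \<rho>_def expect_mix_point[OF S'] lam_def algebra_simps)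
  also have "\<dots> \<le> lam * (2 * t * real N - t / 2 * (\<Sum>i\<in>S'. 1 / w i))"
    using sum_ln_wt_mix_point_ge[OF q S' _ t] wpos tw \<open>\<gamma> > 0\<close>
    unfolding \<rho>_def w_def lam_def by (intro mult_left_mono) auto
  also have "\<dots> = t * (lam * (2 * real N - (\<Sum>i\<in>S'. 1 / w i) / 2))" by (simp add: algebra_simps)
  finally have "mnl_R S' v r - expect N K q (\<lambda>S. mnl_R S v r)
      \<le> lam * (2 * real N - (\<Sum>i\<in>S'. 1 / w i) / 2)"
    using t by (simp add: mult_le_cancel_left_pos)
  thus ?thesis unfolding lam_def w_def .
qed

lemma expect_mono:
  assumes "q \<in> dists N K" "\<And>S. S \<in> assortments N K \<Longrightarrow> f S \<le> g S"
  shows "expect N K q f \<le> expect N K q g"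
  unfolding expect_def using assms by (intro sum_mono mult_left_mono) (auto simp: dists_def)

lemma sum_abs_diff_le_mu_dist2:
  assumes q: "q \<in> dists N K" and S': "S' \<in> assortments N K"
    and wpos: "\<forall>i\<in>{1..N}. wt N K q i > 0" and "\<gamma> > 0" and v: "v \<in> cube N" "v' \<in> cube N"
  shows "(\<Sum>i\<in>S'. \<bar>v' i - v i\<bar>) \<le> \<gamma> / 2 * expect N K q (\<lambda>S. mu_dist2 N S v v')
           + (real K + 1)^3 / \<gamma> * (\<Sum>i\<in>S'. 1 / wt N K q i)"
proof -
  let ?w = "wt N K q"
  define a where "a = \<gamma> / (4 * (real K + 1)^3)"
  have a: "a > 0" unfolding a_def using \<open>\<gamma> > 0\<close> by simp
  have w: "\<And>i. i \<in> S' \<Longrightarrow> ?w i > 0" using wpos assortmentsD(1)[OF S'] by auto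
  have sq: "(\<Sum>i\<in>S'. ?w i * (v i - v' i)^2) \<le> 2 * (real K + 1)^3 * expect N K q (\<lambda>S. mu_dist2 N S v v')"
    unfolding sum_wt_mult_eq_expect[OF assortmentsD(2)[OF S']]
    using expect_mono[OF q sum_square_diff_le_mu_dist2[OF _ v]]
    by (simp add: expect_def sum_distrib_left mult.left_commute)
  have "(\<Sum>i\<in>S'. \<bar>v' i - v i\<bar>) \<le> (\<Sum>i\<in>S'. a * ?w i * (v i - v' i)^2 + 1 / (4 * (a * ?w i)))"
    using abs_le_mult_square_add a w by (intro sum_mono) (simp add: abs_minus_commute)
  also have "\<dots> = a * (\<Sum>i\<in>S'. ?w i * (v i - v' i)^2) + 1 / (4 * a) * (\<Sum>i\<in>S'. 1 / ?w i)"
    by (simp add: sum.distrib sum_distrib_left mult.assoc)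
  also have "\<dots> \<le> a * (2 * (real K + 1)^3 * expect N K q (\<lambda>S. mu_dist2 N S v v'))
      + 1 / (4 * a) * (\<Sum>i\<in>S'. 1 / ?w i)"
    using sq a by simp
  finally show ?thesis unfolding a_def using \<open>\<gamma> > 0\<close> by (simp add: field_simps)
qed

lemma expect_mnl_R_diff_le:
  assumes q: "q \<in> dists N K" and "r \<in> cube N" "c > 0"
  shows "expect N K q (\<lambda>S. mnl_R S v r) - expect N K q (\<lambda>S. mnl_R S v' r)
    \<le> c * expect N K q (\<lambda>S. mu_dist2 N S v v') + real K / (4 * c)"
proof -
  have "expect N K q (\<lambda>S. mnl_R S v r) - expect N K q (\<lambda>S. mnl_R S v' r)
      = expect N K q (\<lambda>S. mnl_R S v r - mnl_R S v' r)"
    unfolding expect_def by (simp add: sum_subtractf[symmetric] algebra_simps)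
  also have "\<dots> \<le> expect N K q (\<lambda>S. c * mu_dist2 N S v v' + real K / (4 * c))"
    using assms by (intro expect_mono mnl_R_diff_le_mu_dist2)
  also have "\<dots> = c * expect N K q (\<lambda>S. mu_dist2 N S v v') + real K / (4 * c) * (\<Sum>S\<in>assortments N K. q S)"
    unfolding expect_def
    by (simp add: algebra_simps sum.distrib sum_distrib_left sum_distrib_right sum_divide_distrib)
  also have "\<dots> = c * expect N K q (\<lambda>S. mu_dist2 N S v v') + real K / (4 * c)"
    using q by (simp add: dists_def)
  finally show ?thesis .
qed

lemma dec_objective_le:
  assumes "1 \<le> K" "\<gamma> > 0" "v \<in> cube N" "r \<in> cube N" and am: "is_argmax N K \<gamma> v r q"
    and "v' \<in> cube N" and S': "S' \<in> assortments N K"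
  shows "mnl_R S' v' r - expect N K q (\<lambda>S. mnl_R S v' r) - \<gamma> * expect N K q (\<lambda>S. mu_dist2 N S v v')
    \<le> 2 * (real K + 1)^4 / \<gamma> * real N + real K / \<gamma>"
proof -
  define D where "D = expect N K q (\<lambda>S. mu_dist2 N S v v')"
  define W where "W = (\<Sum>i\<in>S'. 1 / wt N K q i)"
  have q: "q \<in> dists N K" and wpos: "\<forall>i\<in>{1..N}. wt N K q i > 0"
    using am unfolding is_argmax_def by auto
  have "D \<ge> 0" unfolding D_def mu_dist2_def using expect_mono[OF q, of "\<lambda>_. 0"]
    by (simp add: expect_def sum_nonneg)
  have "W \<ge> 0" unfolding W_def using wpos assortmentsD(1)[OF S'] by (force intro: sum_nonneg)
  have "(real K + 1)^3 * 2 \<le> (real K + 1)^3 * (real K + 1)"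
    using \<open>1 \<le> K\<close> by (intro mult_left_mono) auto
  hence "(real K + 1)^3 * 2 \<le> (real K + 1)^4" by (simp add: eval_nat_numeral)
  hence "(real K + 1)^3 / \<gamma> \<le> (real K + 1)^4 / \<gamma> / 2"
    using \<open>\<gamma> > 0\<close> by (simp add: field_simps)
  hence absorb: "(real K + 1)^3 / \<gamma> * W \<le> (real K + 1)^4 / \<gamma> / 2 * W"
    using \<open>W \<ge> 0\<close> by (rule mult_right_mono)
  have lip: "mnl_R S' v' r - mnl_R S' v r \<le> (\<Sum>i\<in>S'. \<bar>v' i - v i\<bar>)"
    using assms assortmentsD(1,2)[OF S'] by (intro mnl_R_lipschitz) (auto simp: cube_def)
  have "mnl_R S' v r - expect N K q (\<lambda>S. mnl_R S v r) \<le> (real K + 1)^4 / \<gamma> * (2 * real N - W / 2)"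
    unfolding W_def by (rule argmax_first_order[OF am \<open>\<gamma> > 0\<close> S'])
  hence first_order: "mnl_R S' v r - expect N K q (\<lambda>S. mnl_R S v r)
      \<le> 2 * (real K + 1)^4 / \<gamma> * real N - (real K + 1)^4 / \<gamma> / 2 * W"
    by (simp add: algebra_simps)
  have "expect N K q (\<lambda>S. mnl_R S v r) - expect N K q (\<lambda>S. mnl_R S v' r) \<le> \<gamma> / 4 * D + real K / \<gamma>"
    using expect_mnl_R_diff_le[OF q \<open>r \<in> cube N\<close>, of "\<gamma> / 4" v v'] \<open>\<gamma> > 0\<close> unfolding D_def by simp
  moreover have "(\<Sum>i\<in>S'. \<bar>v' i - v i\<bar>) \<le> \<gamma> / 2 * D + (real K + 1)^3 / \<gamma> * W"
    unfolding D_def W_def by (rule sum_abs_diff_le_mu_dist2[OF q S' wpos \<open>\<gamma> > 0\<close> \<open>v \<in> cube N\<close> \<open>v' \<in> cube N\<close>])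
  moreover have "0 \<le> \<gamma> * D" using \<open>\<gamma> > 0\<close> \<open>D \<ge> 0\<close> by simp
  ultimately show ?thesis using lip first_order absorb unfolding D_def[symmetric] by linarith
qed

lemma dec_argmax_le:
  assumes "1 \<le> K" "K \<le> N" "\<gamma> > 0" "v \<in> cube N" "r \<in> cube N" "is_argmax N K \<gamma> v r q"
  shows "dec N K \<gamma> q v r \<le> 40 * real N * real K ^ 4 / \<gamma>"
proof -
  have "(real K + 1)^4 \<le> (2 * real K)^4" using assms(1) by (intro power_mono) auto
  hence "(real K + 1)^4 * real N \<le> 16 * real K ^ 4 * real N"
    by (intro mult_right_mono) (simp_all add: power_mult_distrib)
  moreover have "real K \<le> real N * real K ^ 4"
  proof -
    have "real K \<le> real K ^ 4" using assms(1) by (simp add: self_le_power)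
    also have "\<dots> \<le> real N * real K ^ 4"
      using assms(1,2) by (intro mult_le_cancel_right1[THEN iffD2]) auto
    finally show ?thesis .
  qed
  ultimately have "2 * (real K + 1)^4 * real N + real K \<le> 40 * real N * real K ^ 4"
    using assms(1) by (simp add: algebra_simps)
  hence bound: "2 * (real K + 1)^4 / \<gamma> * real N + real K / \<gamma> \<le> 40 * real N * real K ^ 4 / \<gamma>"
    using assms(3) by (simp add: add_divide_distrib[symmetric] divide_right_mono)
  have "{1} \<in> assortments N K" using assms(1,2) by (auto simp: assortments_def)
  hence "cube N \<times> assortments N K \<noteq> {}" using assms(4) by blast
  thus ?thesis
    unfolding dec_def
    by (intro cSUP_least) (auto intro!: order_trans[OF dec_objective_le[OF assms(1,3,4,5,6)] bound])
qed

theorem theorem4: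
  shows "\<exists>C>0. \<forall>(N::nat) (K::nat) (\<gamma>::real) v r q.
     1 \<le> K \<longrightarrow> K \<le> N \<longrightarrow> \<gamma> > 0 \<longrightarrow> v \<in> cube N \<longrightarrow> r \<in> cube N \<longrightarrow>
     is_argmax N K \<gamma> v r q \<longrightarrow>
     dec N K \<gamma> q v r \<le> C * real N * real K ^ 4 / \<gamma>"
  by (rule exI[of _ 40]) (auto intro: dec_argmax_le)

end
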